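(* Consider an SIR epidemic on a graph $G$ with intrinsic infection rate $\beta$ and a given external infection policy with virulence $\mu$, and an SIS epidemic on the same graph with the same intrinsic infection rate, the same initial infected set, and the identical external infection policy (i.e., the same external rate vector $L(t)$ for all $t$). Then $$T_{SIS}\ge_{st}T_{SIR},$$ i.e., $\mathbb{P}[T_{SIS}>r]\ge\mathbb{P}[T_{SIR}>r]$ for all $r$.
   Context: SIS: each node is susceptible $(0)$ or infected $(1)$; a susceptible node $j$ becomes infected at rate $\beta\cdot(\text{number of infected neighbors})+L_j(t)$ and an infected node becomes susceptible at rate $1$. SIR: each node is susceptible $(0)$, infected $(1)$ or resistant $(e)$; a susceptible node $j$ becomes infected at rate $\beta\cdot(\text{number of infected neighbors})+L_j(t)$, an infected node becomes resistant at rate $1$, and resistant is absorbing. The external vector $L(t)$ has $L_j(t)\ge 0$, $\|L(t)\|_1\le\mu$. $T_{SIS}$ (resp. $T_{SIR}$) is the first time no node is infected. *)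

theory Defs
  imports "HOL-Analysis.Analysis"
begin

datatype sir = S_sus | I_inf | R_res

instance sir :: finite
proof
  have "(UNIV :: sir set) = {S_sus, I_inf, R_res}" by (auto intro: sir.exhaust)
  then show "finite (UNIV :: sir set)" by (metis finite.emptyI finite.insertI)
qed

text \<open>A state is the set of infected nodes. The chain is
  stopped (made absorbing) once no node is infected, so that the mass on states
  with some infected node at time r equals P[T_SIS > r].\<close>
definition sis_rate ::
  "('v::finite \<Rightarrow> 'v \<Rightarrow> bool) \<Rightarrow> real \<Rightarrow> (real \<Rightarrow> 'v \<Rightarrow> real) \<Rightarrow> real \<Rightarrow> 'v set \<Rightarrow> 'v set \<Rightarrow> real"
  where
  "sis_rate E \<beta> L t x y =
     (if x = {} then 0 else
       (\<Sum>j\<in>- x. if y = insert j x then \<beta> * real (card {i\<in>x. E i j}) + L t j else 0)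
     + (\<Sum>j\<in>x. if y = x - {j} then 1 else 0))"

definition sir_rate ::
  "('v::finite \<Rightarrow> 'v \<Rightarrow> bool) \<Rightarrow> real \<Rightarrow> (real \<Rightarrow> 'v \<Rightarrow> real) \<Rightarrow> real \<Rightarrow> ('v \<Rightarrow> sir) \<Rightarrow> ('v \<Rightarrow> sir) \<Rightarrow> real"
  where
  "sir_rate E \<beta> L t x y =
     (if (\<forall>v. x v \<noteq> I_inf) then 0 else
       (\<Sum>j\<in>{j. x j = S_sus}. if y = x(j := I_inf) then \<beta> * real (card {i. E i j \<and> x i = I_inf}) + L t j else 0)
     + (\<Sum>j\<in>{j. x j = I_inf}. if y = x(j := R_res) then 1 else 0))"

text \<open>p is the law (transient distribution) of the time-inhomogeneous Markov chain
  with rates q started at x0: continuous in t and solving the Kolmogorov forward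
  (master) equation in integral form.\<close>
definition forward_law ::
  "(real \<Rightarrow> 's::finite \<Rightarrow> 's \<Rightarrow> real) \<Rightarrow> 's \<Rightarrow> (real \<Rightarrow> 's \<Rightarrow> real) \<Rightarrow> bool" where
  "forward_law q x0 p \<longleftrightarrow>
     (\<forall>y. continuous_on {0..} (\<lambda>t. p t y)) \<and>
     (\<forall>t\<ge>0. \<forall>y. p t y = (if y = x0 then 1 else 0)
        + (LINT s:{0..t}|lborel. (\<Sum>x\<in>UNIV. p s x * q s x y) - p s y * (\<Sum>z\<in>UNIV. q s y z)))"

text \<open>P[T > r] where T is the first time no node is infected.\<close>
definition sis_surv :: "(real \<Rightarrow> 'v::finite set \<Rightarrow> real) \<Rightarrow> real \<Rightarrow> real" where
  "sis_surv p r = (if r < 0 then 1 else (\<Sum>y\<in>{y. y \<noteq> {}}. p r y))"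

definition sir_surv :: "(real \<Rightarrow> ('v::finite \<Rightarrow> sir) \<Rightarrow> real) \<Rightarrow> real \<Rightarrow> real" where
  "sir_surv p r = (if r < 0 then 1 else (\<Sum>y\<in>{y. \<exists>v. y v = I_inf}. p r y))"

end

theory Submission
  imports Defs
begin

text \<open>Run the SIS and the SIR epidemic on a common probability space, coupling every node maximally:
  whenever both chains can make the same move at a node they make it together. Starting from the
  same infected set, the SIR-infected nodes then stay inside the SIS-infected set, so SIS cannot
  die out before SIR. Analytically, the law of the coupled chain is constructed by Picard
  iteration of its forward equation; lumpability shows that its two marginals solve the SIS and
  the SIR forward equations, hence are the given laws by uniqueness; and the law is nonnegative
  and vanishes off the ordered pairs, because no coupled transition leaves them.\<close>

section \<open>Integral inequalities on intervals\<close>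

lemma set_integral_nonneg:
  fixes f :: "real \<Rightarrow> real"
  assumes "\<And>s. s \<in> A \<Longrightarrow> 0 \<le> f s"
  shows "0 \<le> (LINT s:A|lborel. f s)"
  unfolding set_lebesgue_integral_def
  by (intro integral_nonneg_AE AE_I2) (use assms in \<open>auto simp: indicator_def\<close>)

lemma abs_set_integral_le:
  fixes f g :: "real \<Rightarrow> real"
  assumes f: "set_integrable lborel A f" and g: "set_integrable lborel A g"
    and le: "\<And>s. s \<in> A \<Longrightarrow> \<bar>f s\<bar> \<le> g s"
  shows "\<bar>LINT s:A|lborel. f s\<bar> \<le> (LINT s:A|lborel. g s)"
  using set_integral_norm_bound[OF f] set_integral_mono[OF set_integrable_abs[OF f] g le] by simp

lemma set_integral_Icc_power:
  fixes t :: real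
  assumes "0 \<le> t"
  shows "(LINT s:{0..t}|lborel. s ^ n) = t ^ Suc n / Suc n"
proof -
  have "(LINT s:{0..t}|lborel. s ^ n) = (\<integral>x. x ^ n * indicator {0..t} x \<partial>lborel)"
    unfolding set_lebesgue_integral_def by (simp add: mult.commute)
  also have "\<dots> = t ^ Suc n / Suc n"
    using integral_power[of 0 t n] assms by simp
  finally show ?thesis .
qed

lemma set_integral_Icc_exp_term_bound:
  fixes f :: "real \<Rightarrow> real"
  assumes t: "0 \<le> t" and C: "0 \<le> C" and f: "set_integrable lborel {0..t} f"
    and le: "\<And>s. s \<in> {0..t} \<Longrightarrow> f s \<le> M * (C * s) ^ n / fact n"
  shows "C * (LINT s:{0..t}|lborel. f s) \<le> M * (C * t) ^ Suc n / fact (Suc n)"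
proof -
  have "set_integrable lborel {0..t} (\<lambda>s. M * (C * s) ^ n / fact n)"
    by (intro borel_integrable_atLeastAtMost' continuous_intros) auto
  then have "(LINT s:{0..t}|lborel. f s) \<le> (LINT s:{0..t}|lborel. M * (C * s) ^ n / fact n)"
    by (rule set_integral_mono[OF f _ le])
  also have "\<dots> = (M * C ^ n / fact n) * (LINT s:{0..t}|lborel. s ^ n)"
    by (subst set_integral_mult_right[symmetric]) (simp add: power_mult_distrib field_simps)
  also have "\<dots> = (M * C ^ n / fact n) * (t ^ Suc n / Suc n)"
    using set_integral_Icc_power[OF t] by simp
  finally have "C * (LINT s:{0..t}|lborel. f s) \<le> C * ((M * C ^ n / fact n) * (t ^ Suc n / Suc n))"
    using C mult_left_mono by blast
  also have "\<dots> = M * (C * t) ^ Suc n / fact (Suc n)"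
    by (simp add: power_mult_distrib field_simps)
  finally show ?thesis .
qed

text \<open>Gronwall's inequality with zero initial term, by iterating the hypothesis: \<open>m s\<close> is bounded
  by \<open>M (C s)\<^sup>n / n!\<close> for every \<open>n\<close>.\<close>
lemma integral_inequality_imp_zero:
  fixes m :: "real \<Rightarrow> real"
  assumes cont: "continuous_on {0..T} m" and nonneg: "\<And>t. t \<in> {0..T} \<Longrightarrow> 0 \<le> m t"
    and le: "\<And>t. t \<in> {0..T} \<Longrightarrow> m t \<le> C * (LINT s:{0..t}|lborel. m s)"
    and C: "0 \<le> C" and T: "0 \<le> T"
  shows "m T = 0"
proof -
  obtain M where M: "\<forall>s\<in>{0..T}. m s \<le> M"
    using continuous_attains_sup[OF compact_Icc _ cont] T by fastforce
  have bound: "\<forall>s\<in>{0..T}. m s \<le> M * (C * s) ^ n / fact n" for n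
  proof (induction n)
    case 0
    then show ?case using M by auto
  next
    case (Suc n)
    show ?case
    proof
      fix s assume s: "s \<in> {0..T}"
      have "set_integrable lborel {0..s} m"
        by (rule borel_integrable_atLeastAtMost', rule continuous_on_subset[OF cont]) (use s in auto)
      moreover have "m s \<le> C * (LINT u:{0..s}|lborel. m u)" using le s by auto
      ultimately show "m s \<le> M * (C * s) ^ Suc n / fact (Suc n)"
        using set_integral_Icc_exp_term_bound[OF _ C, of s m M n] s Suc by fastforce
    qed
  qed
  have "(\<lambda>n. M * ((C * T) ^ n /\<^sub>R fact n)) \<longlonglongrightarrow> 0"
    by (intro tendsto_mult_right_zero summable_LIMSEQ_zero summable_exp_generic)
  moreover have "m T \<le> M * ((C * T) ^ n /\<^sub>R fact n)" for n
    using bound[of n] T by (auto simp: divide_inverse_commute mult_ac)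
  ultimately have "m T \<le> 0"
    using LIMSEQ_le_const by blast
  then show ?thesis using nonneg T by force
qed

lemma set_integral_Icc_empty:
  fixes f :: "real \<Rightarrow> real"
  assumes "t \<le> 0"
  shows "(LINT s:{0..t}|lborel. f s) = 0"
proof -
  have "AE s in lborel. indicator {0..t} s *\<^sub>R f s = 0"
    using AE_lborel_singleton[of 0] by eventually_elim (use assms in \<open>auto simp: indicator_def\<close>)
  then show ?thesis unfolding set_lebesgue_integral_def by (rule integral_eq_zero_AE)
qed

lemma continuous_on_UNIV_from_half_lines:
  fixes f :: "real \<Rightarrow> real"
  assumes "\<And>T. 0 \<le> T \<Longrightarrow> continuous_on {..T} f"
  shows "continuous_on UNIV f"
proof (rule continuous_at_imp_continuous_on, intro ballI)
  fix x :: real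
  have "continuous_on {..max 0 x + 1} f" using assms by simp
  moreover have "x \<in> interior {..max 0 x + 1}" by simp
  ultimately show "isCont f x" by (rule continuous_on_interior)
qed

lemma continuous_on_set_integral_Icc:
  fixes f :: "real \<Rightarrow> real"
  assumes f: "\<And>a b. set_integrable lborel {a..b} f"
  shows "continuous_on UNIV (\<lambda>t. LINT s:{0..t}|lborel. f s)"
proof (rule continuous_on_UNIV_from_half_lines)
  fix T :: real assume T: "0 \<le> T"
  have "continuous_on ({..0} \<union> {0..T}) (\<lambda>t. LINT s:{0..t}|lborel. f s)"
  proof (rule continuous_on_closed_Un)
    show "continuous_on {..0} (\<lambda>t. LINT s:{0..t}|lborel. f s)"
      by (rule continuous_on_cong[THEN iffD1, OF refl _ continuous_on_const[of _ 0]])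
         (auto simp: set_integral_Icc_empty)
    have "continuous_on {0..T} (\<lambda>t. integral {0..t} f)"
      by (rule indefinite_integral_continuous_1, rule set_borel_integral_eq_integral(1)[OF f])
    then show "continuous_on {0..T} (\<lambda>t. LINT s:{0..t}|lborel. f s)"
      by (simp add: set_borel_integral_eq_integral(2)[OF f])
  qed auto
  moreover have "{..0} \<union> {0..T} = {..T}" using T by auto
  ultimately show "continuous_on {..T} (\<lambda>t. LINT s:{0..t}|lborel. f s)" by simp
qed

lemma last_nonneg_time:
  fixes f :: "real \<Rightarrow> real"
  assumes "continuous_on {0..t} f" and "0 \<le> f 0" and "0 \<le> t"
  obtains a where "0 \<le> a" "a \<le> t" "0 \<le> f a" "\<And>s. a < s \<Longrightarrow> s \<le> t \<Longrightarrow> f s < 0"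
proof -
  define S where "S = {s\<in>{0..t}. 0 \<le> f s}"
  have "0 \<in> S" using assms by (auto simp: S_def)
  have "S = {0..t} \<inter> f -` {0..}" by (auto simp: S_def)
  then have "closed S" using continuous_closed_preimage[OF assms(1)] by simp
  have "bdd_above S" by (auto simp: S_def bdd_above_def)
  then have "Sup S \<in> S" using closed_contains_Sup \<open>closed S\<close> \<open>0 \<in> S\<close> by blast
  moreover have "f s < 0" if "Sup S < s" "s \<le> t" for s
    using cSup_upper[OF _ \<open>bdd_above S\<close>, of s] that \<open>Sup S \<in> S\<close> by (force simp: S_def)
  ultimately show ?thesis using that by (auto simp: S_def)
qed

lemma set_integral_Icc_split:
  fixes g :: "real \<Rightarrow> real"
  assumes "0 \<le> a" "a \<le> t" and g: "\<And>u v. set_integrable lborel {u..v} g"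
  shows "(LINT s:{0..t}|lborel. g s)
    = (LINT s:{0..a}|lborel. g s) + (LINT s:{0..t}|lborel. indicator {a<..} s * g s)"
proof -
  have "(LINT s:{0..t}|lborel. g s)
      = (LINT s|lborel. indicator {0..a} s *\<^sub>R g s + indicator {a<..t} s *\<^sub>R g s)"
    unfolding set_lebesgue_integral_def
    by (rule Bochner_Integration.integral_cong) (use assms in \<open>auto simp: indicator_def\<close>)
  also have "\<dots> = (LINT s:{0..a}|lborel. g s) + (LINT s:{a<..t}|lborel. g s)"
  proof -
    have "set_integrable lborel {a<..t} g" by (rule set_integrable_subset[OF g[of a t]]) auto
    then show ?thesis
      unfolding set_lebesgue_integral_def using g[of 0 a]
      by (intro Bochner_Integration.integral_add) (auto simp: set_integrable_def)
  qed
  also have "(LINT s:{a<..t}|lborel. g s) = (LINT s:{0..t}|lborel. indicator {a<..} s * g s)"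
    unfolding set_lebesgue_integral_def
    by (rule Bochner_Integration.integral_cong) (use assms in \<open>auto simp: indicator_def\<close>)
  finally show ?thesis .
qed

section \<open>Forward equations of finite Markov chains\<close>

definition master_rhs ::
  "(real \<Rightarrow> 's::finite \<Rightarrow> 's \<Rightarrow> real) \<Rightarrow> (real \<Rightarrow> 's \<Rightarrow> real) \<Rightarrow> real \<Rightarrow> 's \<Rightarrow> real" where
  "master_rhs q p s y = (\<Sum>x\<in>UNIV. p s x * q s x y) - p s y * (\<Sum>z\<in>UNIV. q s y z)"

text \<open>Like \<open>forward_law\<close>, but continuous on the whole real line; a \<open>forward_law\<close> becomes one
  by freezing it at its initial value for negative times.\<close>
definition master_solution ::
  "(real \<Rightarrow> 's::finite \<Rightarrow> 's \<Rightarrow> real) \<Rightarrow> 's \<Rightarrow> (real \<Rightarrow> 's \<Rightarrow> real) \<Rightarrow> bool" where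
  "master_solution q x0 p \<longleftrightarrow> (\<forall>y. continuous_on UNIV (\<lambda>t. p t y)) \<and>
     (\<forall>t\<ge>0. \<forall>y. p t y = (if y = x0 then 1 else 0) + (LINT s:{0..t}|lborel. master_rhs q p s y))"

lemma master_solution_continuous: "master_solution q x0 p \<Longrightarrow> continuous_on UNIV (\<lambda>t. p t y)"
  by (simp add: master_solution_def)

lemma master_solution_eq:
  "master_solution q x0 p \<Longrightarrow> 0 \<le> t \<Longrightarrow>
    p t y = (if y = x0 then 1 else 0) + (LINT s:{0..t}|lborel. master_rhs q p s y)"
  by (simp add: master_solution_def)

lemma master_solution_initial: "master_solution q x0 p \<Longrightarrow> p 0 y = (if y = x0 then 1 else 0)"
  using master_solution_eq[of q x0 p 0 y] set_integral_Icc_empty[of 0 "\<lambda>s. master_rhs q p s y"]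
  by simp

lemma forward_law_imp_master_solution:
  assumes "forward_law q x0 p"
  shows "master_solution q x0 (\<lambda>t. p (max 0 t))"
proof -
  have "continuous_on UNIV (\<lambda>t. p (max 0 t) y)" for y
    by (rule continuous_on_compose2[of "{0..}" "\<lambda>t. p t y"])
       (use assms in \<open>auto simp: forward_law_def intro!: continuous_intros\<close>)
  moreover have "(LINT s:{0..t}|lborel. master_rhs q (\<lambda>t. p (max 0 t)) s y)
      = (LINT s:{0..t}|lborel. master_rhs q p s y)" for t y
    by (rule set_lebesgue_integral_cong) (auto simp: master_rhs_def)
  ultimately show ?thesis
    using assms by (auto simp: master_solution_def forward_law_def master_rhs_def)
qed

lemma master_rhs_diff:
  "master_rhs q p1 s y - master_rhs q p2 s y = master_rhs q (\<lambda>s x. p1 s x - p2 s x) s y"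
  by (simp add: master_rhs_def sum_subtractf algebra_simps)

lemma master_rhs_lumped:
  fixes q :: "real \<Rightarrow> 's::finite \<Rightarrow> 's \<Rightarrow> real" and R :: "real \<Rightarrow> 't::finite \<Rightarrow> 't \<Rightarrow> real"
    and \<pi> :: "'s \<Rightarrow> 't"
  assumes lump: "\<And>s u. u \<noteq> \<pi> s \<Longrightarrow> (\<Sum>s'\<in>{s'. \<pi> s' = u}. q r s s') = R r (\<pi> s) u"
  shows "(\<Sum>s\<in>{s. \<pi> s = u}. master_rhs q P r s)
       = master_rhs R (\<lambda>t u. \<Sum>s\<in>{s. \<pi> s = u}. P t s) r u"
proof -
  define F where "F = {s. \<pi> s = u}"
  define QF where "QF x = (\<Sum>s\<in>F. q r x s)" for x
  have inflow: "(\<Sum>s\<in>F. \<Sum>x\<in>UNIV. P r x * q r x s)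
      = (\<Sum>x\<in>UNIV. P r x * R r (\<pi> x) u) + (\<Sum>x\<in>F. P r x * (QF x - R r u u))"
  proof -
    have "(\<Sum>s\<in>F. \<Sum>x\<in>UNIV. P r x * q r x s) = (\<Sum>x\<in>UNIV. P r x * QF x)"
      unfolding QF_def by (subst sum.swap) (simp add: sum_distrib_left)
    also have "\<dots> = (\<Sum>x\<in>UNIV. P r x * R r (\<pi> x) u + (if x \<in> F then P r x * (QF x - R r u u) else 0))"
      by (rule sum.cong) (auto simp: F_def QF_def lump algebra_simps)
    finally show ?thesis by (simp add: sum.distrib sum.If_cases)
  qed
  have total_rate: "(\<Sum>z\<in>UNIV. q r s z) = QF s - R r u u + (\<Sum>u'\<in>UNIV. R r u u')" if "s \<in> F" for s
  proof -
    have "(\<Sum>z\<in>UNIV. q r s z) = (\<Sum>u'\<in>UNIV. \<Sum>z\<in>{z\<in>UNIV. \<pi> z = u'}. q r s z)"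
      by (rule sum.group[symmetric]) auto
    also have "\<dots> = (\<Sum>u'\<in>UNIV. if u' = u then QF s else R r u u')"
      by (rule sum.cong) (use that lump in \<open>auto simp: F_def QF_def\<close>)
    finally show ?thesis by (simp add: sum.remove[of UNIV u] sum.remove[of UNIV u "\<lambda>u'. R r u u'"])
  qed
  have "(\<Sum>s\<in>F. P r s * (\<Sum>z\<in>UNIV. q r s z))
      = (\<Sum>s\<in>F. P r s * (QF s - R r u u) + P r s * (\<Sum>u'\<in>UNIV. R r u u'))"
    by (rule sum.cong) (auto simp: total_rate algebra_simps)
  then have outflow: "(\<Sum>s\<in>F. P r s * (\<Sum>z\<in>UNIV. q r s z))
      = (\<Sum>s\<in>F. P r s * (QF s - R r u u)) + (\<Sum>s\<in>F. P r s) * (\<Sum>u'\<in>UNIV. R r u u')"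
    by (simp add: sum.distrib sum_distrib_right)
  have "(\<Sum>u'\<in>UNIV. (\<Sum>s\<in>{s. \<pi> s = u'}. P r s) * R r u' u)
      = (\<Sum>u'\<in>UNIV. \<Sum>s\<in>{s\<in>UNIV. \<pi> s = u'}. P r s * R r (\<pi> s) u)"
    by (auto simp: sum_distrib_right intro!: sum.cong)
  also have "\<dots> = (\<Sum>x\<in>UNIV. P r x * R r (\<pi> x) u)" by (rule sum.group) auto
  finally show ?thesis
    unfolding master_rhs_def F_def[symmetric] sum_subtractf inflow outflow by simp
qed

locale bounded_rates =
  fixes q :: "real \<Rightarrow> 's::finite \<Rightarrow> 's \<Rightarrow> real" and K :: real
  assumes rate_measurable[measurable]: "\<And>x y. (\<lambda>t. q t x y) \<in> borel_measurable borel"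
    and abs_rate_le: "\<And>t x y. \<bar>q t x y\<bar> \<le> K"
begin

lemma rate_bound_nonneg: "0 \<le> K"
  using abs_rate_le[of 0 undefined undefined] by linarith

lemma master_rhs_measurable:
  assumes [measurable]: "\<And>x. (\<lambda>t. p t x) \<in> borel_measurable borel"
  shows "(\<lambda>s. master_rhs q p s y) \<in> borel_measurable borel"
  unfolding master_rhs_def by measurable

lemma abs_master_rhs_le_block:
  assumes closed: "\<And>x. x \<notin> B \<Longrightarrow> q s x y = 0" and y: "y \<in> B"
  shows "\<bar>master_rhs q p s y\<bar> \<le> K * (CARD('s) + 1) * (\<Sum>x\<in>B. \<bar>p s x\<bar>)"
proof -
  let ?m = "\<Sum>x\<in>B. \<bar>p s x\<bar>"
  have "(\<Sum>x\<in>UNIV. p s x * q s x y) = (\<Sum>x\<in>B. p s x * q s x y)"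
    by (rule sum.mono_neutral_right) (use closed in auto)
  also have "\<bar>\<dots>\<bar> \<le> (\<Sum>x\<in>B. \<bar>p s x\<bar> * K)"
    by (rule order_trans[OF sum_abs]) (auto intro!: sum_mono mult_left_mono abs_rate_le simp: abs_mult)
  finally have inflow: "\<bar>\<Sum>x\<in>UNIV. p s x * q s x y\<bar> \<le> K * ?m"
    by (simp add: sum_distrib_left mult.commute)
  have "\<bar>\<Sum>z\<in>UNIV. q s y z\<bar> \<le> (\<Sum>z\<in>(UNIV::'s set). K)"
    by (rule order_trans[OF sum_abs sum_mono]) (rule abs_rate_le)
  moreover have "\<bar>p s y\<bar> \<le> ?m" by (rule member_le_sum) (use y in auto)
  ultimately have outflow: "\<bar>p s y * (\<Sum>z\<in>UNIV. q s y z)\<bar> \<le> ?m * (CARD('s) * K)"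
    unfolding abs_mult by (intro mult_mono) auto
  show ?thesis using inflow outflow unfolding master_rhs_def by (simp add: algebra_simps)
qed

lemma abs_master_rhs_le: "\<bar>master_rhs q p s y\<bar> \<le> K * (CARD('s) + 1) * (\<Sum>x\<in>UNIV. \<bar>p s x\<bar>)"
  by (rule abs_master_rhs_le_block) auto

lemma master_rhs_integrable:
  assumes "\<And>x. continuous_on UNIV (\<lambda>t. p t x)"
  shows "set_integrable lborel {a..b} (\<lambda>s. master_rhs q p s y)"
proof (rule set_integrable_bound[OF borel_integrable_atLeastAtMost'])
  show "continuous_on {a..b} (\<lambda>s. K * (CARD('s) + 1) * (\<Sum>x\<in>UNIV. \<bar>p s x\<bar>))"
    by (intro continuous_intros continuous_on_subset[OF assms]) auto
  have "(\<lambda>s. master_rhs q p s y) \<in> borel_measurable borel"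
    by (intro master_rhs_measurable borel_measurable_continuous_onI assms)
  then show "set_borel_measurable lborel {a..b} (\<lambda>s. master_rhs q p s y)"
    by (simp add: set_borel_measurable_def)
  show "AE s in lborel. s \<in> {a..b} \<longrightarrow>
      norm (master_rhs q p s y) \<le> norm (K * (CARD('s) + 1) * (\<Sum>x\<in>UNIV. \<bar>p s x\<bar>))"
    using abs_master_rhs_le rate_bound_nonneg by (auto intro: order_trans)
qed

lemma master_equation_vanishes_on_closed_block:
  assumes cont: "\<And>x. continuous_on UNIV (\<lambda>t. p t x)"
    and eq: "\<And>t y. 0 \<le> t \<Longrightarrow> y \<in> B \<Longrightarrow> p t y = (LINT s:{0..t}|lborel. master_rhs q p s y)"
    and closed: "\<And>t x y. x \<notin> B \<Longrightarrow> y \<in> B \<Longrightarrow> q t x y = 0"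
    and T: "0 \<le> T" and y: "y \<in> B"
  shows "p T y = 0"
proof -
  define m where "m t = (\<Sum>y\<in>B. \<bar>p t y\<bar>)" for t
  define c where "c = K * (CARD('s) + 1)"
  have c: "0 \<le> c" using rate_bound_nonneg by (simp add: c_def)
  have m_cont: "continuous_on A m" for A
    unfolding m_def by (intro continuous_intros continuous_on_subset[OF cont]) auto
  have m_nonneg: "0 \<le> m t" for t by (simp add: m_def sum_nonneg)
  have abs_le: "\<bar>p t y\<bar> \<le> c * (LINT s:{0..t}|lborel. m s)" if "0 \<le> t" "y \<in> B" for t y
  proof -
    have "\<bar>master_rhs q p s y\<bar> \<le> c * m s" for s
      using abs_master_rhs_le_block[of B s y p] closed that(2) by (simp add: c_def m_def)
    then have "\<bar>p t y\<bar> \<le> (LINT s:{0..t}|lborel. c * m s)"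
      unfolding eq[OF that]
      by (intro abs_set_integral_le master_rhs_integrable cont set_integrable_mult_right
          borel_integrable_atLeastAtMost' m_cont)
    then show ?thesis by simp
  qed
  have "m T = 0"
  proof (rule integral_inequality_imp_zero[OF m_cont _ _ _ T, where C="CARD('s) * c"])
    show "0 \<le> CARD('s) * c" using c by simp
    fix t assume t: "t \<in> {0..T}"
    show "0 \<le> m t" by (rule m_nonneg)
    have "m t \<le> card B * (c * (LINT s:{0..t}|lborel. m s))"
      unfolding m_def[of t] using sum_mono[of B _ "\<lambda>_. c * (LINT s:{0..t}|lborel. m s)"] abs_le t
      by auto
    also have "\<dots> \<le> CARD('s) * (c * (LINT s:{0..t}|lborel. m s))"
      by (intro mult_right_mono mult_nonneg_nonneg c set_integral_nonneg m_nonneg)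
         (simp add: card_mono)
    finally show "m t \<le> CARD('s) * c * (LINT s:{0..t}|lborel. m s)" by simp
  qed
  then show ?thesis using y by (simp add: m_def sum_nonneg_eq_0_iff)
qed

lemma master_solution_unique:
  assumes sol1: "master_solution q x0 p1" and sol2: "master_solution q x0 p2" and t: "0 \<le> t"
  shows "p1 t y = p2 t y"
proof -
  define d where "d t x = p1 t x - p2 t x" for t x
  have cont1: "continuous_on UNIV (\<lambda>t. p1 t x)" and cont2: "continuous_on UNIV (\<lambda>t. p2 t x)" for x
    using sol1 sol2 by (auto intro: master_solution_continuous)
  have "d t y = 0"
  proof (rule master_equation_vanishes_on_closed_block[where B=UNIV and p=d, simplified])
    show "continuous_on UNIV (\<lambda>t. d t x)" for x
      unfolding d_def by (intro continuous_intros cont1 cont2)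
    fix t y assume t: "0 \<le> (t::real)"
    have "d t y = (LINT s:{0..t}|lborel. master_rhs q p1 s y) - (LINT s:{0..t}|lborel. master_rhs q p2 s y)"
      using master_solution_eq[OF sol1 t] master_solution_eq[OF sol2 t] by (simp add: d_def)
    also have "\<dots> = (LINT s:{0..t}|lborel. master_rhs q d s y)"
      by (subst set_integral_diff(2)[symmetric])
         (auto intro: master_rhs_integrable cont1 cont2 simp: master_rhs_diff d_def[abs_def])
    finally show "d t y = (LINT s:{0..t}|lborel. master_rhs q d s y)" .
  qed (use t in auto)
  then show ?thesis by (simp add: d_def)
qed

lemma master_solution_lumped:
  fixes \<pi> :: "'s \<Rightarrow> 't::finite"
  assumes sol: "master_solution q s0 P"
    and lump: "\<And>r s u. u \<noteq> \<pi> s \<Longrightarrow> (\<Sum>s'\<in>{s'. \<pi> s' = u}. q r s s') = R r (\<pi> s) u"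
  shows "master_solution R (\<pi> s0) (\<lambda>t u. \<Sum>s\<in>{s. \<pi> s = u}. P t s)"
proof -
  have cont: "continuous_on UNIV (\<lambda>t. P t x)" for x using sol by (rule master_solution_continuous)
  have "(\<Sum>s\<in>{s. \<pi> s = u}. P t s) = (if u = \<pi> s0 then 1 else 0) +
       (LINT r:{0..t}|lborel. master_rhs R (\<lambda>t u. \<Sum>s\<in>{s. \<pi> s = u}. P t s) r u)" if t: "0 \<le> t" for t u
  proof -
    have lumped: "(\<Sum>s\<in>{s. \<pi> s = u}. master_rhs q P r s)
        = master_rhs R (\<lambda>t u. \<Sum>s\<in>{s. \<pi> s = u}. P t s) r u" for r
      by (rule master_rhs_lumped) (rule lump)
    have "(\<Sum>s\<in>{s. \<pi> s = u}. P t s)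
        = (\<Sum>s\<in>{s. \<pi> s = u}. (if s = s0 then 1 else 0) + (LINT r:{0..t}|lborel. master_rhs q P r s))"
      using master_solution_eq[OF sol t] by simp
    also have "\<dots> = (if u = \<pi> s0 then 1 else 0)
        + (LINT r:{0..t}|lborel. (\<Sum>s\<in>{s. \<pi> s = u}. master_rhs q P r s))"
      unfolding set_lebesgue_integral_def scaleR_sum_right
      by (subst Bochner_Integration.integral_sum)
         (use master_rhs_integrable[OF cont] in \<open>auto simp: set_integrable_def sum.distrib sum.delta\<close>)
    finally show ?thesis by (simp only: lumped)
  qed
  then show ?thesis
    unfolding master_solution_def by (auto intro!: continuous_intros cont)
qed

lemma master_rhs_ge_neg_part:
  assumes nonneg: "\<And>x z. 0 \<le> q s x z" and y: "p s y \<le> 0"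
  shows "- K * (\<Sum>x\<in>UNIV. max 0 (- p s x)) \<le> master_rhs q p s y"
proof -
  have "- K * max 0 (- p s x) \<le> p s x * q s x y" for x
  proof (cases "0 \<le> p s x")
    case True
    then show ?thesis using nonneg[of x y] rate_bound_nonneg by simp
  next
    case False
    then have "p s x * K \<le> p s x * q s x y"
      using abs_rate_le[of s x y] by (intro mult_left_mono_neg) auto
    then show ?thesis using False by simp
  qed
  then have "- K * (\<Sum>x\<in>UNIV. max 0 (- p s x)) \<le> (\<Sum>x\<in>UNIV. p s x * q s x y)"
    unfolding sum_distrib_left by (rule sum_mono)
  moreover have "0 \<le> - p s y * (\<Sum>z\<in>UNIV. q s y z)"
    using y by (intro mult_nonneg_nonneg sum_nonneg nonneg) auto
  ultimately show ?thesis unfolding master_rhs_def by linarith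
qed

text \<open>Let \<open>a\<close> be the last time in \<open>[0, t]\<close> at which \<open>p\<close> is nonnegative at \<open>y\<close>. On \<open>(a, t]\<close> the
  outflow term of \<open>master_rhs\<close> is nonnegative, so only the negative parts of the
  other coordinates can pull \<open>p t y\<close> below \<open>p a y \<ge> 0\<close>.\<close>
lemma master_solution_neg_part_le:
  assumes sol: "master_solution q x0 p" and nonneg: "\<And>t x y. 0 \<le> q t x y" and t: "0 \<le> t"
  shows "max 0 (- p t y) \<le> K * (LINT s:{0..t}|lborel. \<Sum>x\<in>UNIV. max 0 (- p s x))"
proof (cases "0 \<le> p t y")
  case True
  then show ?thesis
    using rate_bound_nonneg by (simp add: set_integral_nonneg sum_nonneg)
next
  case False
  define n where "n s = (\<Sum>x\<in>UNIV. max 0 (- p s x))" for s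
  have cont: "continuous_on UNIV (\<lambda>t. p t x)" for x using sol by (rule master_solution_continuous)
  obtain a where a: "0 \<le> a" "a \<le> t" "0 \<le> p a y" and negative_after_a: "\<And>s. a < s \<Longrightarrow> s \<le> t \<Longrightarrow> p s y < 0"
    by (rule last_nonneg_time[of t "\<lambda>s. p s y"])
       (use continuous_on_subset[OF cont] master_solution_initial[OF sol] t in auto)
  define g where "g s = master_rhs q p s y" for s
  have g_integrable: "set_integrable lborel {u..v} g" for u v
    unfolding g_def by (rule master_rhs_integrable[OF cont])
  have h_integrable: "set_integrable lborel {0..t} (\<lambda>s. indicator {a<..} s * g s)"
    using integrable_mult_indicator[of "{a<..}" lborel "\<lambda>s. indicator {0..t} s *\<^sub>R g s"] g_integrable
    by (simp add: set_integrable_def mult.left_commute)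
  have "p t y = p a y + (LINT s:{0..t}|lborel. indicator {a<..} s * g s)"
    using master_solution_eq[OF sol t] master_solution_eq[OF sol a(1)]
      set_integral_Icc_split[OF a(1,2) g_integrable] by (simp add: g_def)
  moreover have "- K * (LINT s:{0..t}|lborel. n s) \<le> (LINT s:{0..t}|lborel. indicator {a<..} s * g s)"
  proof -
    have "(LINT s:{0..t}|lborel. - K * n s) \<le> (LINT s:{0..t}|lborel. indicator {a<..} s * g s)"
    proof (rule set_integral_mono[OF _ h_integrable])
      show "set_integrable lborel {0..t} (\<lambda>s. - K * n s)"
        unfolding n_def by (intro set_integrable_mult_right borel_integrable_atLeastAtMost'
            continuous_intros continuous_on_subset[OF cont]) auto
      show "- K * n s \<le> indicator {a<..} s * g s" if "s \<in> {0..t}" for s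
      proof (cases "a < s")
        case True
        then show ?thesis
          using master_rhs_ge_neg_part[where s=s and p=p and y=y, OF nonneg] negative_after_a[of s] that
          by (simp add: g_def n_def)
      qed (use rate_bound_nonneg in \<open>simp add: n_def sum_nonneg\<close>)
    qed
    then show ?thesis by (simp only: set_integral_mult_right)
  qed
  ultimately show ?thesis
    using a False by (simp add: n_def)
qed

lemma master_solution_nonneg:
  assumes sol: "master_solution q x0 p" and nonneg: "\<And>t x y. 0 \<le> q t x y" and T: "0 \<le> T"
  shows "0 \<le> p T y"
proof -
  define n where "n s = (\<Sum>x\<in>UNIV. max 0 (- p s x))" for s
  have cont: "continuous_on {0..T} n"
    unfolding n_def
    by (intro continuous_intros continuous_on_subset[OF master_solution_continuous[OF sol]]) auto
  have "n T = 0"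
  proof (rule integral_inequality_imp_zero[OF cont _ _ _ T, where C="CARD('s) * K"])
    fix t assume "t \<in> {0..T}"
    then show "n t \<le> CARD('s) * K * (LINT s:{0..t}|lborel. n s)"
      using sum_mono[of UNIV "\<lambda>y. max 0 (- p t y)" "\<lambda>_. K * (LINT s:{0..t}|lborel. n s)"]
        master_solution_neg_part_le[OF sol nonneg]
      by (simp add: n_def)
  qed (use rate_bound_nonneg in \<open>auto simp: n_def sum_nonneg\<close>)
  then have "max 0 (- p T y) = 0" by (simp add: n_def sum_nonneg_eq_0_iff)
  then show ?thesis by (simp add: max_def split: if_splits)
qed

lemma master_solution_vanishes_outside_invariant:
  assumes sol: "master_solution q x0 p" and "x0 \<in> I"
    and invariant: "\<And>t x y. x \<in> I \<Longrightarrow> y \<notin> I \<Longrightarrow> q t x y = 0"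
    and "0 \<le> t" and "y \<notin> I"
  shows "p t y = 0"
proof (rule master_equation_vanishes_on_closed_block[where B="- I" and p=p])
  show "p t y = (LINT s:{0..t}|lborel. master_rhs q p s y)" if "0 \<le> t" "y \<in> - I" for t y
    using master_solution_eq[OF sol that(1), of y] that(2) \<open>x0 \<in> I\<close> by auto
qed (use assms master_solution_continuous[OF sol] in auto)

text \<open>Lumping does not determine the diagonal \<open>R r u u\<close>, which therefore is assumed to be zero.\<close>
lemma lumped_bounded_rates:
  fixes \<pi> :: "'s \<Rightarrow> 't::finite"
  assumes nonneg: "\<And>t x y. 0 \<le> q t x y" and "surj \<pi>"
    and lump: "\<And>r s u. u \<noteq> \<pi> s \<Longrightarrow> (\<Sum>s'\<in>{s'. \<pi> s' = u}. q r s s') = R r (\<pi> s) u"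
    and diagonal: "\<And>r u. R r u u = 0"
  shows "bounded_rates R (CARD('s) * K)"
proof
  fix u u' :: 't
  obtain s where s: "u = \<pi> s" using \<open>surj \<pi>\<close> by (metis surjD)
  have lumped_rate: "R t u u' = (\<Sum>s'\<in>{s'. \<pi> s' = u'}. q t s s')" if "u' \<noteq> u" for t
    using lump[of u' s t] that s by simp
  show "(\<lambda>t. R t u u') \<in> borel_measurable borel"
    by (cases "u' = u") (simp_all add: diagonal lumped_rate)
  fix t
  show "\<bar>R t u u'\<bar> \<le> CARD('s) * K"
  proof (cases "u' = u")
    case False
    have "(\<Sum>s'\<in>{s'. \<pi> s' = u'}. q t s s') \<le> (\<Sum>s'\<in>UNIV. q t s s')"
      by (rule sum_mono2) (auto intro: nonneg)
    also have "\<dots> \<le> (\<Sum>s'\<in>(UNIV :: 's set). K)"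
      by (rule sum_mono) (use abs_rate_le abs_le_D1 in blast)
    finally show ?thesis using lumped_rate[OF False] nonneg by (simp add: sum_nonneg)
  qed (simp add: diagonal rate_bound_nonneg)
qed

lemma forward_law_eq_lumped:
  fixes \<pi> :: "'s \<Rightarrow> 't::finite"
  assumes sol: "master_solution q s0 P" and p: "forward_law R (\<pi> s0) p"
    and nonneg: "\<And>t x y. 0 \<le> q t x y" and "surj \<pi>"
    and lump: "\<And>r s u. u \<noteq> \<pi> s \<Longrightarrow> (\<Sum>s'\<in>{s'. \<pi> s' = u}. q r s s') = R r (\<pi> s) u"
    and diagonal: "\<And>r u. R r u u = 0"
    and t: "0 \<le> t"
  shows "p t u = (\<Sum>s\<in>{s. \<pi> s = u}. P t s)"
  using bounded_rates.master_solution_unique[OF lumped_bounded_rates[OF nonneg \<open>surj \<pi>\<close> lump diagonal]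
      forward_law_imp_master_solution[OF p] master_solution_lumped[OF sol lump] t]
    t by simp

subsection \<open>Existence by Picard iteration\<close>

primrec picard :: "'s \<Rightarrow> nat \<Rightarrow> real \<Rightarrow> 's \<Rightarrow> real" where
  "picard x0 0 = (\<lambda>t y. if y = x0 then 1 else 0)"
| "picard x0 (Suc n) =
    (\<lambda>t y. (if y = x0 then 1 else 0) + (LINT s:{0..t}|lborel. master_rhs q (picard x0 n) s y))"

declare picard.simps(2) [simp del]

definition picard_step :: "'s \<Rightarrow> nat \<Rightarrow> real \<Rightarrow> 's \<Rightarrow> real" where
  "picard_step x0 n t y = picard x0 (Suc n) t y - picard x0 n t y"

definition picard_limit :: "'s \<Rightarrow> real \<Rightarrow> 's \<Rightarrow> real" where
  "picard_limit x0 t y = (if y = x0 then 1 else 0) + (\<Sum>n. picard_step x0 n t y)"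

definition lipschitz_const :: real where
  "lipschitz_const = CARD('s) * (K * (CARD('s) + 1))"

definition step_bound :: "real \<Rightarrow> nat \<Rightarrow> real" where
  "step_bound T n = (lipschitz_const * T) ^ Suc n / fact (Suc n)"

lemma lipschitz_const_nonneg: "0 \<le> lipschitz_const"
  using rate_bound_nonneg by (simp add: lipschitz_const_def)

lemma continuous_on_picard: "continuous_on UNIV (\<lambda>t. picard x0 n t y)"
proof (induction n arbitrary: y)
  case (Suc n)
  have "continuous_on UNIV (\<lambda>t. LINT s:{0..t}|lborel. master_rhs q (picard x0 n) s y)"
    by (intro continuous_on_set_integral_Icc master_rhs_integrable Suc)
  then show ?case by (auto simp: picard.simps intro!: continuous_intros)
qed simp

lemma picard_nonpos: "t \<le> 0 \<Longrightarrow> picard x0 n t y = (if y = x0 then 1 else 0)"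
  by (cases n) (simp_all add: picard.simps set_integral_Icc_empty)

lemma continuous_on_picard_step: "continuous_on UNIV (\<lambda>t. picard_step x0 n t y)"
  unfolding picard_step_def by (intro continuous_intros continuous_on_picard)

lemma sum_abs_set_integral_master_rhs_le:
  assumes cont: "\<And>x. continuous_on UNIV (\<lambda>t. p t x)" and t: "0 \<le> t"
  shows "(\<Sum>y\<in>UNIV. \<bar>LINT s:{0..t}|lborel. master_rhs q p s y\<bar>)
    \<le> lipschitz_const * (LINT s:{0..t}|lborel. \<Sum>x\<in>UNIV. \<bar>p s x\<bar>)"
proof -
  have "\<bar>LINT s:{0..t}|lborel. master_rhs q p s y\<bar>
      \<le> (LINT s:{0..t}|lborel. K * (CARD('s) + 1) * (\<Sum>x\<in>UNIV. \<bar>p s x\<bar>))" for y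
    by (intro abs_set_integral_le master_rhs_integrable cont abs_master_rhs_le
        set_integrable_mult_right borel_integrable_atLeastAtMost' continuous_intros
        continuous_on_subset[OF cont]) auto
  then have "(\<Sum>y\<in>UNIV. \<bar>LINT s:{0..t}|lborel. master_rhs q p s y\<bar>)
      \<le> (\<Sum>y\<in>(UNIV :: 's set). K * (CARD('s) + 1) * (LINT s:{0..t}|lborel. \<Sum>x\<in>UNIV. \<bar>p s x\<bar>))"
    by (intro sum_mono) simp
  then show ?thesis by (simp add: lipschitz_const_def)
qed

lemma picard_step_Suc:
  assumes "0 \<le> t"
  shows "picard_step x0 (Suc n) t y = (LINT s:{0..t}|lborel. master_rhs q (picard_step x0 n) s y)"
proof -
  have "picard_step x0 (Suc n) t y = (LINT s:{0..t}|lborel. master_rhs q (picard x0 (Suc n)) s y)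
      - (LINT s:{0..t}|lborel. master_rhs q (picard x0 n) s y)"
    by (simp add: picard_step_def picard.simps)
  also have "\<dots> = (LINT s:{0..t}|lborel. master_rhs q (picard_step x0 n) s y)"
    by (simp only: set_integral_diff(2)[OF master_rhs_integrable master_rhs_integrable, symmetric]
        continuous_on_picard master_rhs_diff picard_step_def[abs_def])
  finally show ?thesis .
qed

lemma sum_abs_picard_step_le:
  assumes "0 \<le> t"
  shows "(\<Sum>y\<in>UNIV. \<bar>picard_step x0 n t y\<bar>) \<le> (lipschitz_const * t) ^ Suc n / fact (Suc n)"
  using assms
proof (induction n arbitrary: t)
  case 0
  have "(\<Sum>y\<in>UNIV. \<bar>picard_step x0 0 t y\<bar>)
      = (\<Sum>y\<in>UNIV. \<bar>LINT s:{0..t}|lborel. master_rhs q (picard x0 0) s y\<bar>)"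
    by (simp add: picard_step_def picard.simps)
  also have "\<dots> \<le> lipschitz_const * (LINT s:{0..t}|lborel. \<Sum>x\<in>UNIV. \<bar>picard x0 0 s x\<bar>)"
    by (rule sum_abs_set_integral_master_rhs_le[OF continuous_on_picard 0])
  also have "\<dots> = lipschitz_const * (LINT s:{0..t}|lborel. 1)"
    by (simp add: if_distrib sum.delta cong: if_cong)
  also have "\<dots> \<le> 1 * (lipschitz_const * t) ^ Suc 0 / fact (Suc 0)"
    by (rule set_integral_Icc_exp_term_bound[OF 0 lipschitz_const_nonneg])
       (auto intro: borel_integrable_atLeastAtMost')
  finally show ?case by simp
next
  case (Suc n)
  have "(\<Sum>y\<in>UNIV. \<bar>picard_step x0 (Suc n) t y\<bar>)
      = (\<Sum>y\<in>UNIV. \<bar>LINT s:{0..t}|lborel. master_rhs q (picard_step x0 n) s y\<bar>)"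
    using Suc.prems by (simp add: picard_step_Suc)
  also have "\<dots> \<le> lipschitz_const * (LINT s:{0..t}|lborel. \<Sum>x\<in>UNIV. \<bar>picard_step x0 n s x\<bar>)"
    by (rule sum_abs_set_integral_master_rhs_le[OF continuous_on_picard_step Suc.prems])
  also have "\<dots> \<le> 1 * (lipschitz_const * t) ^ Suc (Suc n) / fact (Suc (Suc n))"
    by (rule set_integral_Icc_exp_term_bound[OF Suc.prems lipschitz_const_nonneg])
       (use Suc.IH in \<open>auto intro!: borel_integrable_atLeastAtMost' continuous_intros
         continuous_on_subset[OF continuous_on_picard_step]\<close>)
  finally show ?case by simp
qed

lemma summable_step_bound: "summable (step_bound T)"
proof -
  have "summable (\<lambda>n. (lipschitz_const * T) ^ n / fact n)"
    using summable_exp_generic[of "lipschitz_const * T"] by (simp add: divide_inverse_commute)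
  then show ?thesis unfolding step_bound_def by (subst summable_Suc_iff)
qed

lemma step_bound_nonneg: "0 \<le> T \<Longrightarrow> 0 \<le> step_bound T n"
  using lipschitz_const_nonneg by (simp add: step_bound_def)

lemma abs_picard_step_le:
  assumes T: "0 \<le> T" and "t \<le> T"
  shows "\<bar>picard_step x0 n t y\<bar> \<le> step_bound T n"
proof (cases "t < 0")
  case True
  then show ?thesis
    by (simp add: picard_step_def picard_nonpos step_bound_nonneg[OF T])
next
  case False
  have "\<bar>picard_step x0 n t y\<bar> \<le> (\<Sum>y\<in>UNIV. \<bar>picard_step x0 n t y\<bar>)" by (rule member_le_sum) auto
  also have "\<dots> \<le> (lipschitz_const * t) ^ Suc n / fact (Suc n)"
    using sum_abs_picard_step_le False by simp
  also have "\<dots> \<le> step_bound T n"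
    unfolding step_bound_def
    by (intro divide_right_mono power_mono mult_left_mono) (use lipschitz_const_nonneg False assms in auto)
  finally show ?thesis .
qed

lemma picard_telescope: "picard x0 n t y = (if y = x0 then 1 else 0) + (\<Sum>k<n. picard_step x0 k t y)"
  unfolding picard_step_def using sum_lessThan_telescope[of "\<lambda>n. picard x0 n t y" n] by simp

lemma picard_tendsto: "(\<lambda>n. picard x0 n t y) \<longlonglongrightarrow> picard_limit x0 t y"
  unfolding picard_telescope[abs_def] picard_limit_def
  by (intro tendsto_intros summable_LIMSEQ summable_comparison_test'[OF summable_step_bound[of "max 0 t"]])
     (auto intro: abs_picard_step_le)

lemma continuous_on_picard_limit: "continuous_on UNIV (\<lambda>t. picard_limit x0 t y)"
proof (rule continuous_on_UNIV_from_half_lines)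
  fix T :: real assume T: "0 \<le> T"
  have "uniform_limit {..T} (\<lambda>n t. \<Sum>k<n. picard_step x0 k t y) (\<lambda>t. \<Sum>k. picard_step x0 k t y) sequentially"
    by (rule Weierstrass_m_test[OF _ summable_step_bound]) (use abs_picard_step_le T in auto)
  then have "continuous_on {..T} (\<lambda>t. \<Sum>k. picard_step x0 k t y)"
    by (rule uniform_limit_theorem[rotated])
       (auto intro!: always_eventually continuous_on_sum continuous_on_subset[OF continuous_on_picard_step])
  then show "continuous_on {..T} (\<lambda>t. picard_limit x0 t y)"
    unfolding picard_limit_def by (auto intro!: continuous_intros)
qed

lemma abs_picard_le:
  assumes "0 \<le> T" and "t \<le> T"
  shows "\<bar>picard x0 n t y\<bar> \<le> 1 + suminf (step_bound T)"
proof -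
  have "\<bar>picard x0 n t y\<bar> \<le> \<bar>if y = x0 then 1 else 0\<bar> + (\<Sum>k<n. \<bar>picard_step x0 k t y\<bar>)"
    unfolding picard_telescope[of x0 n] by (rule order_trans[OF abs_triangle_ineq add_left_mono[OF sum_abs]])
  also have "\<dots> \<le> 1 + (\<Sum>k<n. step_bound T k)"
    by (intro add_mono sum_mono abs_picard_step_le assms) auto
  also have "\<dots> \<le> 1 + suminf (step_bound T)"
    by (intro add_left_mono sum_le_suminf summable_step_bound step_bound_nonneg assms) auto
  finally show ?thesis .
qed

text \<open>Dominated convergence passes the Picard recursion to the limit.\<close>
lemma master_solution_picard_limit: "master_solution q x0 (picard_limit x0)"
proof -
  have cont: "\<And>x. continuous_on UNIV (\<lambda>t. picard_limit x0 t x)" by (rule continuous_on_picard_limit)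
  have "picard_limit x0 t y = (if y = x0 then 1 else 0) + (LINT s:{0..t}|lborel. master_rhs q (picard_limit x0) s y)"
    if t: "0 \<le> t" for t y
  proof -
    define B where "B = K * (CARD('s) + 1) * (CARD('s) * (1 + suminf (step_bound t)))"
    have "(\<lambda>n. LINT s:{0..t}|lborel. master_rhs q (picard x0 n) s y)
        \<longlonglongrightarrow> (LINT s:{0..t}|lborel. master_rhs q (picard_limit x0) s y)"
      unfolding set_lebesgue_integral_def
    proof (rule integral_dominated_convergence[where w="\<lambda>s. indicator {0..t} s * B"])
      show "(\<lambda>s. indicat_real {0..t} s *\<^sub>R master_rhs q (picard_limit x0) s y) \<in> borel_measurable lborel"
        using master_rhs_measurable[of "picard_limit x0" y] borel_measurable_continuous_onI[OF cont] by simp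
      show "(\<lambda>s. indicat_real {0..t} s *\<^sub>R master_rhs q (picard x0 n) s y) \<in> borel_measurable lborel" for n
        using master_rhs_measurable[of "picard x0 n" y] borel_measurable_continuous_onI[OF continuous_on_picard]
        by simp
      show "integrable lborel (\<lambda>s. indicat_real {0..t} s * B)"
        using integrable_mult_indicator[of "{0..t}" lborel "\<lambda>_. B"] by (simp add: emeasure_lborel_Icc_eq)
      show "AE s in lborel. (\<lambda>n. indicat_real {0..t} s *\<^sub>R master_rhs q (picard x0 n) s y)
          \<longlonglongrightarrow> indicat_real {0..t} s *\<^sub>R master_rhs q (picard_limit x0) s y"
        unfolding master_rhs_def by (intro AE_I2 tendsto_intros picard_tendsto)
      have "\<bar>master_rhs q (picard x0 n) s y\<bar> \<le> B" if "s \<in> {0..t}" for n s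
      proof -
        have "(\<Sum>x\<in>UNIV. \<bar>picard x0 n s x\<bar>) \<le> (\<Sum>x\<in>(UNIV::'s set). 1 + suminf (step_bound t))"
          by (intro sum_mono abs_picard_le) (use that in auto)
        then show ?thesis unfolding B_def
          by (intro order_trans[OF abs_master_rhs_le mult_left_mono]) (use rate_bound_nonneg in auto)
      qed
      then show "AE s in lborel. norm (indicat_real {0..t} s *\<^sub>R master_rhs q (picard x0 n) s y)
          \<le> indicat_real {0..t} s * B" for n
        by (intro AE_I2) (simp add: indicator_def)
    qed
    then have "(\<lambda>n. picard x0 (Suc n) t y)
        \<longlonglongrightarrow> (if y = x0 then 1 else 0) + (LINT s:{0..t}|lborel. master_rhs q (picard_limit x0) s y)"
      by (simp only: picard.simps) (intro tendsto_intros)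
    moreover have "(\<lambda>n. picard x0 (Suc n) t y) \<longlonglongrightarrow> picard_limit x0 t y"
      using picard_tendsto LIMSEQ_Suc by blast
    ultimately show ?thesis using LIMSEQ_unique by blast
  qed
  then show ?thesis unfolding master_solution_def using cont by blast
qed

end

section \<open>Coupling the SIS and the SIR epidemic\<close>

definition sis_infection_rate ::
  "('v \<Rightarrow> 'v \<Rightarrow> bool) \<Rightarrow> real \<Rightarrow> (real \<Rightarrow> 'v \<Rightarrow> real) \<Rightarrow> real \<Rightarrow> 'v set \<Rightarrow> 'v \<Rightarrow> real" where
  "sis_infection_rate E \<beta> L t y j =
     (if y \<noteq> {} \<and> j \<notin> y then \<beta> * real (card {i\<in>y. E i j}) + L t j else 0)"

definition sir_infection_rate ::
  "('v \<Rightarrow> 'v \<Rightarrow> bool) \<Rightarrow> real \<Rightarrow> (real \<Rightarrow> 'v \<Rightarrow> real) \<Rightarrow> real \<Rightarrow> ('v \<Rightarrow> sir) \<Rightarrow> 'v \<Rightarrow> real" where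
  "sir_infection_rate E \<beta> L t x j =
     (if (\<exists>v. x v = I_inf) \<and> x j = S_sus then \<beta> * real (card {i. E i j \<and> x i = I_inf}) + L t j else 0)"

definition sis_recovery_rate :: "'v set \<Rightarrow> 'v \<Rightarrow> real" where
  "sis_recovery_rate y j = (if y \<noteq> {} \<and> j \<in> y then 1 else 0)"

definition sir_recovery_rate :: "('v \<Rightarrow> sir) \<Rightarrow> 'v \<Rightarrow> real" where
  "sir_recovery_rate x j = (if (\<exists>v. x v = I_inf) \<and> x j = I_inf then 1 else 0)"

definition jump :: "'a \<Rightarrow> 'a \<Rightarrow> real \<Rightarrow> real" where
  "jump target s' r = (if s' = target then r else 0)"

text \<open>Node \<open>j\<close> is coupled maximally:
  a move both chains can make at \<open>j\<close> happens jointly at the smaller of the two rates, and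
  the excess rate of either chain moves that chain alone.\<close>
definition coupled_node_rate ::
  "('v \<Rightarrow> 'v \<Rightarrow> bool) \<Rightarrow> real \<Rightarrow> (real \<Rightarrow> 'v \<Rightarrow> real) \<Rightarrow> real \<Rightarrow>
    'v set \<times> ('v \<Rightarrow> sir) \<Rightarrow> 'v \<Rightarrow> 'v set \<times> ('v \<Rightarrow> sir) \<Rightarrow> real" where
  "coupled_node_rate E \<beta> L t s j s' =
     (let a = sis_infection_rate E \<beta> L t (fst s) j; b = sir_infection_rate E \<beta> L t (snd s) j;
          c = sis_recovery_rate (fst s) j; d = sir_recovery_rate (snd s) j
      in jump (insert j (fst s), (snd s)(j := I_inf)) s' (min a b)
       + jump (insert j (fst s), snd s) s' (a - min a b)
       + jump (fst s, (snd s)(j := I_inf)) s' (b - min a b)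
       + jump (fst s - {j}, (snd s)(j := R_res)) s' (min c d)
       + jump (fst s - {j}, snd s) s' (c - min c d)
       + jump (fst s, (snd s)(j := R_res)) s' (d - min c d))"

definition coupled_rate ::
  "('v::finite \<Rightarrow> 'v \<Rightarrow> bool) \<Rightarrow> real \<Rightarrow> (real \<Rightarrow> 'v \<Rightarrow> real) \<Rightarrow> real \<Rightarrow>
    'v set \<times> ('v \<Rightarrow> sir) \<Rightarrow> 'v set \<times> ('v \<Rightarrow> sir) \<Rightarrow> real" where
  "coupled_rate E \<beta> L t s s' = (\<Sum>j\<in>UNIV. coupled_node_rate E \<beta> L t s j s')"

definition sir_below_sis :: "'v set \<times> ('v \<Rightarrow> sir) \<Rightarrow> bool" where
  "sir_below_sis s \<longleftrightarrow> {v. snd s v = I_inf} \<subseteq> fst s"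

lemma sum_jump_fiber:
  fixes \<pi> :: "'a::finite \<Rightarrow> 'b"
  shows "(\<Sum>s'\<in>{s'. \<pi> s' = u}. jump target s' r) = (if \<pi> target = u then r else 0)"
  unfolding jump_def by (simp add: sum.delta)

lemma sum_coupled_rate_fst:
  fixes E :: "'v::finite \<Rightarrow> 'v \<Rightarrow> bool"
  assumes "u \<noteq> fst s"
  shows "(\<Sum>s'\<in>{s'. fst s' = u}. coupled_rate E \<beta> L t s s') = sis_rate E \<beta> L t (fst s) u"
proof -
  obtain y x where s: "s = (y, x)" by force
  have "(\<Sum>s'\<in>{s'. fst s' = u}. coupled_rate E \<beta> L t s s')
      = (\<Sum>j\<in>UNIV. \<Sum>s'\<in>{s'. fst s' = u}. coupled_node_rate E \<beta> L t s j s')"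
    unfolding coupled_rate_def by (rule sum.swap)
  also have "\<dots> = (\<Sum>j\<in>UNIV. (if insert j y = u then sis_infection_rate E \<beta> L t y j else 0)
      + (if y - {j} = u then sis_recovery_rate y j else 0))"
    by (rule sum.cong) (use assms in \<open>auto simp: coupled_node_rate_def Let_def sum.distrib sum_jump_fiber s\<close>)
  also have "\<dots> = sis_rate E \<beta> L t y u"
  proof (cases "y = {}")
    case True
    then show ?thesis
      by (auto intro!: sum.neutral simp: sis_rate_def sis_infection_rate_def sis_recovery_rate_def)
  next
    case False
    have "(\<Sum>j\<in>UNIV. (if insert j y = u then sis_infection_rate E \<beta> L t y j else 0)
        + (if y - {j} = u then sis_recovery_rate y j else 0))
      = (\<Sum>j\<in>UNIV. if j \<in> -y then (if u = insert j y then \<beta> * real (card {i\<in>y. E i j}) + L t j else 0) else 0)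
      + (\<Sum>j\<in>UNIV. if j \<in> y then (if u = y - {j} then 1 else 0) else 0)"
      unfolding sum.distrib[symmetric]
      by (rule sum.cong) (use False in \<open>auto simp: sis_infection_rate_def sis_recovery_rate_def\<close>)
    then show ?thesis
      unfolding sum.inter_restrict[OF finite_class.finite_UNIV, symmetric] by (simp add: sis_rate_def False)
  qed
  finally show ?thesis by (simp add: s)
qed

lemma sum_coupled_rate_snd:
  fixes E :: "'v::finite \<Rightarrow> 'v \<Rightarrow> bool"
  assumes "u \<noteq> snd s"
  shows "(\<Sum>s'\<in>{s'. snd s' = u}. coupled_rate E \<beta> L t s s') = sir_rate E \<beta> L t (snd s) u"
proof -
  obtain y x where s: "s = (y, x)" by force
  have "(\<Sum>s'\<in>{s'. snd s' = u}. coupled_rate E \<beta> L t s s')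
      = (\<Sum>j\<in>UNIV. \<Sum>s'\<in>{s'. snd s' = u}. coupled_node_rate E \<beta> L t s j s')"
    unfolding coupled_rate_def by (rule sum.swap)
  also have "\<dots> = (\<Sum>j\<in>UNIV. (if x(j := I_inf) = u then sir_infection_rate E \<beta> L t x j else 0)
      + (if x(j := R_res) = u then sir_recovery_rate x j else 0))"
    by (rule sum.cong) (use assms in \<open>auto simp: coupled_node_rate_def Let_def sum.distrib sum_jump_fiber s\<close>)
  also have "\<dots> = sir_rate E \<beta> L t x u"
  proof (cases "\<forall>v. x v \<noteq> I_inf")
    case True
    then show ?thesis
      by (auto intro!: sum.neutral simp: sir_rate_def sir_infection_rate_def sir_recovery_rate_def)
  next
    case False
    have "(\<Sum>j\<in>UNIV. (if x(j := I_inf) = u then sir_infection_rate E \<beta> L t x j else 0)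
        + (if x(j := R_res) = u then sir_recovery_rate x j else 0))
      = (\<Sum>j\<in>UNIV. if j \<in> {j. x j = S_sus}
            then (if u = x(j := I_inf) then \<beta> * real (card {i. E i j \<and> x i = I_inf}) + L t j else 0) else 0)
      + (\<Sum>j\<in>UNIV. if j \<in> {j. x j = I_inf} then (if u = x(j := R_res) then 1 else 0) else 0)"
      unfolding sum.distrib[symmetric]
      by (rule sum.cong) (use False in \<open>auto simp: sir_infection_rate_def sir_recovery_rate_def\<close>)
    then show ?thesis
      unfolding sum.inter_restrict[OF finite_class.finite_UNIV, symmetric]
      using False by (auto simp: sir_rate_def)
  qed
  finally show ?thesis by (simp add: s)
qed

lemma sis_rate_diagonal: "sis_rate E \<beta> L t y y = 0"
proof -
  have "(\<Sum>j\<in>- y. if y = insert j y then \<beta> * real (card {i\<in>y. E i j}) + L t j else 0) = 0"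
    by (rule sum.neutral) auto
  moreover have "(\<Sum>j\<in>y. if y = y - {j} then 1 else 0) = (0::real)"
    by (rule sum.neutral) auto
  ultimately show ?thesis by (simp add: sis_rate_def)
qed

lemma sir_rate_diagonal: "sir_rate E \<beta> L t x x = 0"
  by (auto intro!: sum.neutral simp: sir_rate_def fun_eq_iff)

lemma infection_rate_bounds:
  fixes L :: "real \<Rightarrow> 'v::finite \<Rightarrow> real" and \<beta> \<mu> :: real and S :: "'v set"
  assumes "0 \<le> \<beta>" and "\<forall>t j. 0 \<le> L t j" and "\<forall>t j. L t j \<le> \<mu>"
  shows "0 \<le> \<beta> * real (card S) + L t j" and "\<beta> * real (card S) + L t j \<le> \<beta> * CARD('v) + \<mu>"
proof -
  have "\<beta> * real (card S) \<le> \<beta> * CARD('v)"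
    by (intro mult_left_mono) (auto simp: card_mono assms(1))
  then show "0 \<le> \<beta> * real (card S) + L t j" and "\<beta> * real (card S) + L t j \<le> \<beta> * CARD('v) + \<mu>"
    using assms by (auto intro: add_mono)
qed

lemma coupled_node_rate_bounds:
  fixes L :: "real \<Rightarrow> 'v::finite \<Rightarrow> real" and \<beta> \<mu> :: real
  assumes "0 \<le> \<beta>" and "\<forall>t j. 0 \<le> L t j" and "\<forall>t j. L t j \<le> \<mu>"
  shows "0 \<le> coupled_node_rate E \<beta> L t s j s'"
    and "coupled_node_rate E \<beta> L t s j s' \<le> 2 * (\<beta> * CARD('v) + \<mu>) + 2"
proof -
  define a b c d where "a = sis_infection_rate E \<beta> L t (fst s) j" and "b = sir_infection_rate E \<beta> L t (snd s) j"
    and "c = sis_recovery_rate (fst s) j" and "d = sir_recovery_rate (snd s) j"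
  have "0 \<le> \<beta> * CARD('v) + \<mu>"
    using infection_rate_bounds[OF assms, of "{}" t j] by linarith
  then have ab: "0 \<le> a" "a \<le> \<beta> * CARD('v) + \<mu>" "0 \<le> b" "b \<le> \<beta> * CARD('v) + \<mu>"
    using infection_rate_bounds[OF assms]
    by (auto simp: a_def b_def sis_infection_rate_def sir_infection_rate_def)
  have cd: "0 \<le> c" "c \<le> 1" "0 \<le> d" "d \<le> 1"
    by (auto simp: c_def d_def sis_recovery_rate_def sir_recovery_rate_def)
  have jump_bounds: "0 \<le> jump target s' r" "jump target s' r \<le> r" if "0 \<le> r" for target r
    using that by (auto simp: jump_def)
  show "0 \<le> coupled_node_rate E \<beta> L t s j s'"
    unfolding coupled_node_rate_def Let_def a_def[symmetric] b_def[symmetric] c_def[symmetric] d_def[symmetric]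
    using ab cd by (intro add_nonneg_nonneg jump_bounds) auto
  have "coupled_node_rate E \<beta> L t s j s'
      \<le> min a b + (a - min a b) + (b - min a b) + min c d + (c - min c d) + (d - min c d)"
    unfolding coupled_node_rate_def Let_def a_def[symmetric] b_def[symmetric] c_def[symmetric] d_def[symmetric]
    using ab cd by (intro add_mono jump_bounds) auto
  also have "\<dots> \<le> 2 * (\<beta> * CARD('v) + \<mu>) + 2" using ab cd by auto
  finally show "coupled_node_rate E \<beta> L t s j s' \<le> 2 * (\<beta> * CARD('v) + \<mu>) + 2" .
qed

lemma coupled_rate_nonneg:
  fixes L :: "real \<Rightarrow> 'v::finite \<Rightarrow> real" and \<beta> \<mu> :: real
  assumes "0 \<le> \<beta>" and "\<forall>t j. 0 \<le> L t j" and "\<forall>t j. L t j \<le> \<mu>"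
  shows "0 \<le> coupled_rate E \<beta> L t s s'"
  unfolding coupled_rate_def by (intro sum_nonneg coupled_node_rate_bounds(1)[OF assms])

lemma bounded_rates_coupled_rate:
  fixes L :: "real \<Rightarrow> 'v::finite \<Rightarrow> real" and \<beta> \<mu> :: real
  assumes "0 \<le> \<beta>" and "\<forall>t j. 0 \<le> L t j" and "\<forall>t j. L t j \<le> \<mu>"
    and [measurable]: "\<And>j. (\<lambda>t. L t j) \<in> borel_measurable borel"
  shows "bounded_rates (coupled_rate E \<beta> L) (CARD('v) * (2 * (\<beta> * CARD('v) + \<mu>) + 2))"
proof
  show "(\<lambda>t. coupled_rate E \<beta> L t s s') \<in> borel_measurable borel" for s s'
    unfolding coupled_rate_def coupled_node_rate_def Let_def jump_def sis_infection_rate_def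
      sir_infection_rate_def by measurable
  have "coupled_rate E \<beta> L t s s' \<le> (\<Sum>j\<in>(UNIV::'v set). 2 * (\<beta> * CARD('v) + \<mu>) + 2)" for t s s'
    unfolding coupled_rate_def by (intro sum_mono coupled_node_rate_bounds(2)[OF assms(1-3)])
  then show "\<bar>coupled_rate E \<beta> L t s s'\<bar> \<le> CARD('v) * (2 * (\<beta> * CARD('v) + \<mu>) + 2)" for t s s'
    using coupled_rate_nonneg[OF assms(1-3)] by simp
qed

text \<open>Joint moves preserve the order. A lone SIR infection of a node outside the SIS-infected
  set has rate zero, because there the SIS infection rate counts a superset of infected
  neighbours; and an SIR-infected node is SIS-infected, so it never recovers in SIS alone.\<close>
lemma coupled_rate_preserves_sir_below_sis:
  fixes E :: "'v::finite \<Rightarrow> 'v \<Rightarrow> bool"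
  assumes "0 \<le> \<beta>" and L: "\<forall>t j. 0 \<le> L t j" and s: "sir_below_sis s" and s': "\<not> sir_below_sis s'"
  shows "coupled_rate E \<beta> L t s s' = 0"
  unfolding coupled_rate_def
proof (rule sum.neutral, intro ballI)
  fix j
  obtain y x where yx: "s = (y, x)" by force
  have below: "{v. x v = I_inf} \<subseteq> y" using s by (simp add: sir_below_sis_def yx)
  let ?a = "sis_infection_rate E \<beta> L t y j" and ?b = "sir_infection_rate E \<beta> L t x j"
  let ?c = "sis_recovery_rate y j" and ?d = "sir_recovery_rate x j"
  have unreachable: "jump (insert j y, x(j := I_inf)) s' r = 0" "jump (insert j y, x) s' r = 0"
    "jump (y - {j}, x(j := R_res)) s' r = 0" "jump (y, x(j := R_res)) s' r = 0" for r
    using s' below by (auto simp: jump_def sir_below_sis_def split: if_splits)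
  have "?b \<le> ?a" if "j \<notin> y"
  proof (cases "(\<exists>v. x v = I_inf) \<and> x j = S_sus")
    case True
    then have "y \<noteq> {}" using below by auto
    have "card {i. E i j \<and> x i = I_inf} \<le> card {i\<in>y. E i j}"
      by (rule card_mono) (use below in auto)
    then show ?thesis
      using True that \<open>y \<noteq> {}\<close> \<open>0 \<le> \<beta>\<close>
      by (simp add: sis_infection_rate_def sir_infection_rate_def mult_left_mono)
  next
    case False
    then show ?thesis
      using L \<open>0 \<le> \<beta>\<close> by (auto simp: sis_infection_rate_def sir_infection_rate_def)
  qed
  then have lone_sir_infection: "jump (y, x(j := I_inf)) s' (?b - min ?a ?b) = 0"
    using s' below by (cases "j \<in> y") (auto simp: jump_def sir_below_sis_def split: if_splits)
  have "?c = 1" if "x j = I_inf" using that below by (auto simp: sis_recovery_rate_def sir_recovery_rate_def)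
  then have lone_sis_recovery: "jump (y - {j}, x) s' (?c - min ?c ?d) = 0"
    using s' below
    by (cases "x j = I_inf") (auto simp: jump_def sir_below_sis_def sir_recovery_rate_def split: if_splits)
  show "coupled_node_rate E \<beta> L t s j s' = 0"
    unfolding coupled_node_rate_def Let_def yx fst_conv snd_conv unreachable lone_sir_infection
      lone_sis_recovery by simp
qed

lemma sis_sir_coupling:
  fixes E :: "'v::finite \<Rightarrow> 'v \<Rightarrow> bool" and \<beta> \<mu> :: real
  assumes "0 \<le> \<beta>" and L_nonneg: "\<forall>t j. 0 \<le> L t j" and L_le: "\<forall>t j. L t j \<le> \<mu>"
    and L_meas: "\<And>j. (\<lambda>t. L t j) \<in> borel_measurable borel"
    and SIS: "forward_law (sis_rate E \<beta> L) A pSIS"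
    and SIR: "forward_law (sir_rate E \<beta> L) (\<lambda>v. if v \<in> A then I_inf else S_sus) pSIR"
  obtains P where "\<And>r y. 0 \<le> r \<Longrightarrow> pSIS r y = (\<Sum>s\<in>{s. fst s = y}. P r s)"
    and "\<And>r x. 0 \<le> r \<Longrightarrow> pSIR r x = (\<Sum>s\<in>{s. snd s = x}. P r s)"
    and "\<And>r s. 0 \<le> r \<Longrightarrow> 0 \<le> P r s"
    and "\<And>r s. 0 \<le> r \<Longrightarrow> \<not> sir_below_sis s \<Longrightarrow> P r s = 0"
proof -
  interpret coupled: bounded_rates "coupled_rate E \<beta> L" "CARD('v) * (2 * (\<beta> * CARD('v) + \<mu>) + 2)"
    by (rule bounded_rates_coupled_rate[OF assms(1-4)])
  define s0 where "s0 = (A, \<lambda>v. if v \<in> A then I_inf else S_sus)"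
  have sol: "master_solution (coupled_rate E \<beta> L) s0 (coupled.picard_limit s0)"
    by (rule coupled.master_solution_picard_limit)
  have surj_fst: "surj (fst :: 'v set \<times> ('v \<Rightarrow> sir) \<Rightarrow> 'v set)"
    by (rule surjI[where f="\<lambda>y. (y, undefined)"]) simp
  have surj_snd: "surj (snd :: 'v set \<times> ('v \<Rightarrow> sir) \<Rightarrow> 'v \<Rightarrow> sir)"
    by (rule surjI[where f="\<lambda>x. (undefined, x)"]) simp
  have nonneg: "0 \<le> coupled_rate E \<beta> L t s s'" for t s s'
    by (rule coupled_rate_nonneg[OF assms(1-3)])
  show ?thesis
  proof
    show "pSIS r y = (\<Sum>s\<in>{s. fst s = y}. coupled.picard_limit s0 r s)" if "0 \<le> r" for r y
      using coupled.forward_law_eq_lumped[OF sol _ nonneg _ sum_coupled_rate_fst sis_rate_diagonal that]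
        SIS surj_fst by (simp add: s0_def)
    show "pSIR r x = (\<Sum>s\<in>{s. snd s = x}. coupled.picard_limit s0 r s)" if "0 \<le> r" for r x
      using coupled.forward_law_eq_lumped[OF sol _ nonneg _ sum_coupled_rate_snd sir_rate_diagonal that]
        SIR surj_snd by (simp add: s0_def)
    show "0 \<le> coupled.picard_limit s0 r s" if "0 \<le> r" for r s
      by (rule coupled.master_solution_nonneg[OF sol nonneg that])
    show "coupled.picard_limit s0 r s = 0" if "0 \<le> r" "\<not> sir_below_sis s" for r s
      by (rule coupled.master_solution_vanishes_outside_invariant[OF sol, where I="Collect sir_below_sis"])
         (use that coupled_rate_preserves_sir_below_sis[OF assms(1,2)] in
           \<open>auto simp: s0_def sir_below_sis_def\<close>)
  qed
qed

lemma sum_fibers: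
  fixes g :: "'s::finite \<Rightarrow> 't::finite"
  shows "(\<Sum>u\<in>{u. Q u}. \<Sum>s\<in>{s. g s = u}. h s) = (\<Sum>s\<in>{s. Q (g s)}. h s)"
proof -
  have "(\<Sum>u\<in>{u. Q u}. \<Sum>s\<in>{s. g s = u}. h s) = (\<Sum>u\<in>{u. Q u}. \<Sum>s\<in>{s\<in>{s. Q (g s)}. g s = u}. h s)"
    by (rule sum.cong) (auto intro!: sum.cong)
  also have "\<dots> = (\<Sum>s\<in>{s. Q (g s)}. h s)" by (rule sum.group) auto
  finally show ?thesis .
qed

theorem lemma4:
  fixes E :: "'v::finite \<Rightarrow> 'v \<Rightarrow> bool"
    and \<beta> \<mu> :: real
    and L :: "real \<Rightarrow> 'v \<Rightarrow> real"
    and A :: "'v set"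
    and pSIS :: "real \<Rightarrow> 'v set \<Rightarrow> real"
    and pSIR :: "real \<Rightarrow> ('v \<Rightarrow> sir) \<Rightarrow> real"
  assumes sym: "\<forall>i j. E i j \<longleftrightarrow> E j i"
    and irrefl: "\<forall>i. \<not> E i i"
    and beta: "\<beta> > 0"
    and L_nonneg: "\<forall>t j. L t j \<ge> 0"
    and L_virulence: "\<forall>t. (\<Sum>j\<in>UNIV. L t j) \<le> \<mu>"
    and L_meas: "\<forall>j. (\<lambda>t. L t j) \<in> borel_measurable borel"
    and SIS: "forward_law (sis_rate E \<beta> L) A pSIS"
    and SIR: "forward_law (sir_rate E \<beta> L) (\<lambda>v. if v \<in> A then I_inf else S_sus) pSIR"
  shows "\<forall>r. sis_surv pSIS r \<ge> sir_surv pSIR r"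
proof (intro allI)
  fix r :: real
  have L_le: "\<forall>t j. L t j \<le> \<mu>"
    using member_le_sum[of _ UNIV] L_nonneg L_virulence by (meson UNIV_I finite order_trans)
  obtain P where SIS_marginal: "\<And>r y. 0 \<le> r \<Longrightarrow> pSIS r y = (\<Sum>s\<in>{s. fst s = y}. P r s)"
    and SIR_marginal: "\<And>r x. 0 \<le> r \<Longrightarrow> pSIR r x = (\<Sum>s\<in>{s. snd s = x}. P r s)"
    and nonneg: "\<And>r s. 0 \<le> r \<Longrightarrow> 0 \<le> P r s"
    and below: "\<And>r s. 0 \<le> r \<Longrightarrow> \<not> sir_below_sis s \<Longrightarrow> P r s = 0"
    by (rule sis_sir_coupling[OF less_imp_le[OF beta] L_nonneg L_le L_meas[rule_format] SIS SIR]) blast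
  show "sis_surv pSIS r \<ge> sir_surv pSIR r"
  proof (cases "r < 0")
    case False
    have "sir_surv pSIR r = (\<Sum>s\<in>{s. \<exists>v. snd s v = I_inf}. P r s)"
      using False by (simp add: sir_surv_def SIR_marginal sum_fibers[where Q="\<lambda>x. \<exists>v. x v = I_inf"])
    also have "\<dots> = (\<Sum>s\<in>{s. \<exists>v. snd s v = I_inf} \<inter> {s. fst s \<noteq> {}}. P r s)"
      by (rule sum.mono_neutral_right) (use False in \<open>auto intro!: below simp: sir_below_sis_def\<close>)
    also have "\<dots> \<le> (\<Sum>s\<in>{s. fst s \<noteq> {}}. P r s)"
      by (rule sum_mono2) (use False nonneg in auto)
    also have "\<dots> = sis_surv pSIS r"
      using False by (simp add: sis_surv_def SIS_marginal sum_fibers[where Q="\<lambda>y. y \<noteq> {}"])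
    finally show ?thesis .
  qed (simp add: sis_surv_def sir_surv_def)
qed

end
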